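(* Let $g$ be a nondegenerate symmetric bilinear form on $\mathbb{R}^n$ with $n_-(g)=1$, $R:[0,1]\to\mathcal L(\mathbb{R}^n)$ a continuous map of $g$-symmetric operators, $P\subset\mathbb{R}^n$ a subspace on which $g$ is nondegenerate, and $Y:[0,1]\to\mathbb{R}^n$ a solution of $Y''=RY$ with $g(Y,Y)<0$ on $[0,1]$. Let $\hat{\mathcal K}_0=\{\hat V\in H^1_P([0,1],\mathbb{R}^n): g(\hat V'(u),Y(0))\text{ is constant a.e.}\}$ and $C_0(\hat V,\hat W)=\int_0^1g(\hat V'(u),\hat W'(u))\,du$. Then $$n_-(C_0|_{\hat{\mathcal K}_0})=n_-(g|_P).$$
   Context: $g$-symmetric: $g(Tx,y)=g(x,Ty)$. $H^1_P([0,1],\mathbb{R}^n)=\{V\in H^1([0,1],\mathbb{R}^n):V(0)\in P,\ V(1)=0\}$. For a symmetric bilinear form $B$, $n_-(B)$ is the supremum of dimensions of subspaces on which $B$ is negative definite. *)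

theory Defs
  imports "HOL-Analysis.Analysis" "HOL-Library.Function_Algebras"
begin

definition neg_index :: "(real \<Rightarrow> 'a \<Rightarrow> 'a) \<Rightarrow> ('a::ab_group_add \<Rightarrow> 'a \<Rightarrow> real) \<Rightarrow> 'a set \<Rightarrow> enat" where
  "neg_index scl B S = Sup {enat (vector_space.dim scl W) | W.
      module.subspace scl W \<and> W \<subseteq> S \<and> (\<forall>w\<in>W. w \<noteq> 0 \<longrightarrow> B w w < 0)}"

definition fscale :: "real \<Rightarrow> (real \<Rightarrow> real^'n) \<Rightarrow> (real \<Rightarrow> real^'n)" where
  "fscale c V = (\<lambda>u. c *\<^sub>R V u)"

definition is_h1_deriv :: "(real \<Rightarrow> real^'n) \<Rightarrow> (real \<Rightarrow> real^'n) \<Rightarrow> bool" where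
  "is_h1_deriv V V' \<longleftrightarrow> V' integrable_on {0..1} \<and> (\<lambda>u. (norm (V' u))\<^sup>2) integrable_on {0..1}
     \<and> (\<forall>t\<in>{0..1}. V t = V 0 + integral {0..t} V')"

text \<open>H^1([0,1],R^n); curves are represented as functions on the reals vanishing outside [0,1].\<close>
definition H1 :: "(real \<Rightarrow> real^'n) set" where
  "H1 = {V. (\<exists>V'. is_h1_deriv V V') \<and> (\<forall>t. t \<notin> {0..1} \<longrightarrow> V t = 0)}"

definition h1_deriv :: "(real \<Rightarrow> real^'n) \<Rightarrow> (real \<Rightarrow> real^'n)" where
  "h1_deriv V = (SOME V'. is_h1_deriv V V')"

definition H1_P :: "(real^'n) set \<Rightarrow> (real \<Rightarrow> real^'n) set" where
  "H1_P P = {V \<in> H1. V 0 \<in> P \<and> V 1 = 0}"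

definition hatK0 :: "(real^'n \<Rightarrow> real^'n \<Rightarrow> real) \<Rightarrow> (real^'n) set \<Rightarrow> real^'n \<Rightarrow> (real \<Rightarrow> real^'n) set" where
  "hatK0 g P y0 = {V \<in> H1_P P. \<exists>c. AE u in lebesgue. u \<in> {0..1} \<longrightarrow> g (h1_deriv V u) y0 = c}"

definition C0 :: "(real^'n \<Rightarrow> real^'n \<Rightarrow> real) \<Rightarrow> (real \<Rightarrow> real^'n) \<Rightarrow> (real \<Rightarrow> real^'n) \<Rightarrow> real" where
  "C0 g V W = integral {0..1} (\<lambda>u. g (h1_deriv V u) (h1_deriv W u))"

end

(*
  Evaluation at 0 and the straight lines t \<mapsto> (1 - t) x compare C0 on hatK0 with g on P in
  both directions. A line has constant derivative -x, so C0 restricts to g on lines. Conversely,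
  let V \<in> hatK0 have derivative D with mean m = -V(0). Then D - m is g-orthogonal to the timelike
  vector Y(0) almost everywhere, hence spacelike because g has index one, and
  C0(V, V) = \<integral> g(D - m, D - m) + g(m, m) \<ge> g(V(0), V(0)). A negative definite subspace of
  either side is therefore mapped injectively onto one of the other side.
*)
theory Submission
  imports Defs
begin

lemma vector_space_fscale: "vector_space (fscale :: real \<Rightarrow> (real \<Rightarrow> real^'n) \<Rightarrow> _)"
  by unfold_locales (auto simp: fscale_def fun_eq_iff scaleR_add_right scaleR_add_left)

lemma linear_dim_image_eq:
  assumes lin: "Vector_Spaces.linear s1 s2 f" and W: "module.subspace s1 W" and inj: "inj_on f W"
  shows "vector_space.dim s2 (f ` W) = vector_space.dim s1 W"
proof -
  interpret Vector_Spaces.linear s1 s2 f by (rule lin)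
  obtain B where B: "B \<subseteq> W" "vs1.independent B" "W \<subseteq> vs1.span B" "card B = vs1.dim W"
    using vs1.basis_exists by blast
  have span_B: "vs1.span B = W"
    using B W vs1.span_minimal by blast
  have "vs2.independent (f ` B)"
    using independent_injective_image[OF B(2)] inj span_B by simp
  then have "vs2.dim (f ` W) = card (f ` B)"
    using span_image span_B vs2.dim_span_eq_card_independent by metis
  also have "\<dots> = card B"
    using card_image inj B(1) inj_on_subset by blast
  finally show ?thesis using B(4) by simp
qed

lemma dim_le_neg_index:
  assumes "module.subspace s W" and "W \<subseteq> S" and "\<forall>w\<in>W. w \<noteq> 0 \<longrightarrow> B w w < 0"
  shows "enat (vector_space.dim s W) \<le> neg_index s B S"
  unfolding neg_index_def using assms by (intro Sup_upper) blast

lemma neg_index_le_by_linear_map: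
  assumes lin: "Vector_Spaces.linear s1 s2 f" and maps: "f ` S1 \<subseteq> S2"
    and le: "\<And>v. v \<in> S1 \<Longrightarrow> B2 (f v) (f v) \<le> B1 v v"
    and ker: "\<And>v. v \<in> S1 \<Longrightarrow> f v = 0 \<Longrightarrow> 0 \<le> B1 v v"
  shows "neg_index s1 B1 S1 \<le> neg_index s2 B2 S2"
  unfolding neg_index_def[of s1]
proof (rule Sup_least, clarify)
  interpret Vector_Spaces.linear s1 s2 f by (rule lin)
  fix W assume W: "vs1.subspace W" "W \<subseteq> S1" and neg: "\<forall>w\<in>W. w \<noteq> 0 \<longrightarrow> B1 w w < 0"
  have "inj_on f W"
  proof (rule inj_onI)
    fix v w assume "v \<in> W" "w \<in> W" "f v = f w"
    then have "v - w \<in> W" "f (v - w) = 0"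
      using W(1) vs1.subspace_diff diff by auto
    then show "v = w"
      using ker neg W(2) by force
  qed
  moreover have "f ` W \<subseteq> S2"
    using W(2) maps by blast
  moreover have "\<forall>x\<in>f ` W. x \<noteq> 0 \<longrightarrow> B2 x x < 0"
    using le neg W(2) by fastforce
  ultimately show "enat (vs1.dim W) \<le> neg_index s2 B2 S2"
    using dim_le_neg_index[OF subspace_image[OF W(1)]] linear_dim_image_eq[OF lin W(1)] by simp
qed

lemma neg_index_le_1_orthogonal_nonneg:
  fixes g :: "'a::real_vector \<Rightarrow> 'a \<Rightarrow> real"
  assumes g: "bilinear g" and sym: "\<And>x y. g x y = g y x"
    and index: "neg_index scaleR g UNIV \<le> 1"
    and y: "g y y < 0" and zy: "g z y = 0"
  shows "0 \<le> g z z"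
proof (rule ccontr)
  assume "\<not> 0 \<le> g z z"
  then have z: "g z z < 0" by simp
  have quadratic: "g (a *\<^sub>R y + b *\<^sub>R z) (a *\<^sub>R y + b *\<^sub>R z) = a * a * g y y + b * b * g z z" for a b
    using g zy sym[of y z]
    by (simp add: bilinear_ladd bilinear_radd bilinear_lmul bilinear_rmul algebra_simps)
  have "z \<notin> span {y}"
  proof
    assume "z \<in> span {y}"
    then obtain k where "z = k *\<^sub>R y" by (auto simp: span_singleton)
    then show False
      using zy y z g by (auto simp: bilinear_lmul bilinear_lzero)
  qed
  moreover have "y \<noteq> 0" "y \<noteq> z"
    using y zy g by (auto simp: bilinear_lzero)
  ultimately have "dim (span {z, y}) = 2"
    by (simp add: independent_insert dim_eq_card_independent)
  moreover have "\<forall>w\<in>span {z, y}. w \<noteq> 0 \<longrightarrow> g w w < 0"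
  proof (intro ballI impI)
    fix w assume "w \<in> span {z, y}" "w \<noteq> 0"
    then obtain a b where w: "w = a *\<^sub>R y + b *\<^sub>R z"
      by (auto simp: span_insert span_singleton) (metis diff_add_cancel)
    with \<open>w \<noteq> 0\<close> have "0 < a * a \<or> 0 < b * b"
      by (auto simp: zero_less_mult_iff)
    then have "a * a * g y y + b * b * g z z < 0"
      using y z by (smt (verit) mult_nonneg_nonpos mult_pos_neg zero_le_square)
    then show "g w w < 0" using quadratic w by simp
  qed
  ultimately have "enat 2 \<le> neg_index scaleR g UNIV"
    using dim_le_neg_index[of scaleR "span {z, y}"] subspace_span[of "{z, y}"]
    by (simp add: subspace_raw_def dim_raw_def)
  then show False
    using index order_trans by (fastforce simp: one_enat_def)
qed

lemma ae_zero_of_indefinite_integral_zero: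
  fixes f :: "real \<Rightarrow> 'b::euclidean_space"
  assumes f: "f integrable_on {a..b}" and zero: "\<And>t. t \<in> {a..b} \<Longrightarrow> integral {a..t} f = 0"
  shows "\<exists>N. negligible N \<and> (\<forall>u\<in>{a..b} - N. f u = 0)"
proof -
  define F where "F = (\<lambda>x. if x \<in> {a..b} then f x else 0)"
  have "F integrable_on cbox c d" for c d
    using integrable_on_subcbox integrable_restrict_UNIV f unfolding F_def by blast
  then obtain N where N: "negligible N"
    and lebesgue_point: "\<And>x e. \<lbrakk>x \<notin> N; 0 < e\<rbrakk> \<Longrightarrow> \<exists>d>0. \<forall>h. 0 < h \<and> h < d \<longrightarrow>
        norm (integral (cbox x (x + h *\<^sub>R One)) F /\<^sub>R h ^ DIM(real) - F x) < e"
    by (rule integrable_ccontinuous_explicit) blast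
  \<comment> \<open>At a Lebesgue point u < b of f the averages over [u, u + h] tend to f u, but they vanish.\<close>
  have "f u = 0" if u: "u \<in> {a..b} - (N \<union> {b})" for u
  proof -
    have "norm (f u) < e" if e: "e > 0" for e
    proof -
      have "\<exists>d>0. \<forall>h. 0 < h \<and> h < d \<longrightarrow> norm (integral {u..u+h} F /\<^sub>R h - F u) < e"
        using lebesgue_point[OF _ e, of u] u by simp
      then obtain d where "d > 0"
        and d: "\<And>h. 0 < h \<Longrightarrow> h < d \<Longrightarrow> norm (integral {u..u+h} F /\<^sub>R h - F u) < e"
        by blast
      define h where "h = min (d/2) ((b - u)/2)"
      have h: "0 < h" "h < d" "u + h \<le> b"
        using \<open>d > 0\<close> u unfolding h_def by (auto simp: min_def field_simps)
      have "integral {u..u+h} F = integral {u..u+h} f"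
        using u h by (intro integral_cong) (auto simp: F_def)
      also have "\<dots> = integral {a..u+h} f - integral {a..u} f"
        using Henstock_Kurzweil_Integration.integral_combine[where a=a and c=u and b="u+h" and f=f]
          integrable_on_subinterval[OF f, of a "u+h"] u h
        by (simp add: algebra_simps)
      also have "\<dots> = 0"
        using zero u h by simp
      finally show ?thesis
        using d[OF h(1,2)] u by (simp add: F_def)
    qed
    then show "f u = 0"
      by (metis less_irrefl zero_less_norm_iff)
  qed
  then show ?thesis
    using N by (intro exI[of _ "N \<union> {b}"]) auto
qed

lemma is_h1_deriv_h1_deriv: "V \<in> H1 \<Longrightarrow> is_h1_deriv V (h1_deriv V)"
  unfolding H1_def h1_deriv_def by (auto intro: someI[of "is_h1_deriv V"])

lemma is_h1_deriv_unique:
  assumes D1: "is_h1_deriv V D1" and D2: "is_h1_deriv V D2"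
  shows "\<exists>N. negligible N \<and> (\<forall>u\<in>{0..1} - N. D1 u = D2 u)"
proof -
  have int: "D1 integrable_on {0..1}" "D2 integrable_on {0..1}"
    using D1 D2 unfolding is_h1_deriv_def by blast+
  have zero: "integral {0..t} (\<lambda>u. D1 u - D2 u) = 0" if t: "t \<in> {0..1}" for t
  proof -
    have "D1 integrable_on {0..t}" "D2 integrable_on {0..t}"
      using int t by (auto intro: integrable_on_subinterval)
    then have "integral {0..t} (\<lambda>u. D1 u - D2 u) = integral {0..t} D1 - integral {0..t} D2"
      by (rule integral_diff)
    also have "\<dots> = 0"
      using D1 D2 t unfolding is_h1_deriv_def by (metis diff_self add_diff_cancel_left')
    finally show ?thesis .
  qed
  then show ?thesis
    using ae_zero_of_indefinite_integral_zero[OF integrable_diff[OF int] zero] by auto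
qed

lemma integrable_bilinear_square:
  fixes g :: "'a::euclidean_space \<Rightarrow> 'a \<Rightarrow> real" and D :: "real \<Rightarrow> 'a"
  assumes g: "bilinear g" and D: "D integrable_on {a..b}"
    and D2: "(\<lambda>u. (norm (D u))\<^sup>2) integrable_on {a..b}"
  shows "(\<lambda>u. g (D u) (D u)) integrable_on {a..b}"
proof -
  obtain K where K: "\<And>x y. norm (g x y) \<le> K * norm x * norm y"
    using bilinear_bounded[OF g] by blast
  have "(\<lambda>u. g (D u) (D u)) \<in> borel_measurable (lebesgue_on {a..b})"
    by (rule borel_measurable_bilinear[OF g]) (use integrable_imp_measurable[OF D] in auto)
  moreover have "(\<lambda>u. K * (norm (D u))\<^sup>2) integrable_on {a..b}"
    using D2 by (rule integrable_on_mult_right)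
  moreover have "norm (g (D u) (D u)) \<le> K * (norm (D u))\<^sup>2" for u
    using K[of "D u" "D u"] by (simp add: power2_eq_square mult.assoc)
  ultimately show ?thesis
    by (rule measurable_bounded_by_integrable_imp_integrable) auto
qed

lemma has_integral_bilinear_centered:
  fixes g :: "'a::euclidean_space \<Rightarrow> 'a \<Rightarrow> real" and D :: "real \<Rightarrow> 'a"
  assumes g: "bilinear g" and sym: "\<And>x y. g x y = g y x"
    and D: "D integrable_on {0..1}" and D2: "(\<lambda>u. (norm (D u))\<^sup>2) integrable_on {0..1}"
  defines "m \<equiv> integral {0..1} D"
  shows "((\<lambda>u. g (D u - m) (D u - m)) has_integral
           integral {0..1} (\<lambda>u. g (D u) (D u)) - g m m) {0..1}"
proof -
  have expand: "g (D u - m) (D u - m) = g (D u) (D u) - 2 * g (D u) m + g m m" for u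
    using g sym[of m "D u"] by (simp add: bilinear_lsub bilinear_rsub algebra_simps)
  have "bounded_linear (\<lambda>x. g x m)"
    using g by (simp add: bilinear_def linear_conv_bounded_linear)
  then have "((\<lambda>u. g (D u) m) has_integral g m m) {0..1}"
    using has_integral_linear[OF integrable_integral[OF D]] by (simp add: m_def o_def)
  moreover have "((\<lambda>u. g (D u) (D u)) has_integral integral {0..1} (\<lambda>u. g (D u) (D u))) {0..1}"
    using integrable_bilinear_square[OF g D D2] by (rule integrable_integral)
  moreover have "((\<lambda>u::real. g m m) has_integral g m m) {0..1}"
    using has_integral_const_real[of "g m m" 0 1] by simp
  ultimately have "((\<lambda>u. g (D u) (D u) - 2 * g (D u) m + g m m) has_integral
      integral {0..1} (\<lambda>u. g (D u) (D u)) - 2 * g m m + g m m) {0..1}"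
    by (intro has_integral_add has_integral_diff has_integral_mult_right)
  then show ?thesis
    by (simp add: expand)
qed

lemma has_integral_nonneg_off_negligible:
  fixes f :: "'n::euclidean_space \<Rightarrow> real"
  assumes f: "(f has_integral i) S" and N: "negligible N" and nonneg: "\<And>x. x \<in> S - N \<Longrightarrow> 0 \<le> f x"
  shows "0 \<le> i"
proof -
  have "((\<lambda>x. if x \<in> N then 0 else f x) has_integral i) S"
    by (rule has_integral_spike[OF N _ f]) auto
  then show ?thesis
    by (rule has_integral_nonneg) (use nonneg in auto)
qed

lemma initial_value_le_C0:
  fixes g :: "real^'n \<Rightarrow> real^'n \<Rightarrow> real"
  assumes g: "bilinear g" and sym: "\<And>x y. g x y = g y x"
    and index: "neg_index scaleR g UNIV \<le> 1"
    and y0: "g y0 y0 < 0" and V: "V \<in> hatK0 g P y0"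
  shows "g (V 0) (V 0) \<le> C0 g V V"
proof -
  define D where "D = h1_deriv V"
  define m where "m = integral {0..1} D"
  have "V \<in> H1" and V1: "V 1 = 0"
    using V by (auto simp: hatK0_def H1_P_def)
  then have "is_h1_deriv V D"
    unfolding D_def using is_h1_deriv_h1_deriv by blast
  then have D: "D integrable_on {0..1}" "(\<lambda>u. (norm (D u))\<^sup>2) integrable_on {0..1}"
    and "\<forall>t\<in>{0..1}. V t = V 0 + integral {0..t} D"
    unfolding is_h1_deriv_def by blast+
  then have "V 1 = V 0 + m"
    unfolding m_def by (metis atLeastAtMost_iff order_refl zero_le_one)
  then have m: "m = - V 0"
    using V1 by (simp add: eq_neg_iff_add_eq_0 add.commute)
  obtain c N where N: "negligible N" and c: "\<And>u. u \<in> {0..1} - N \<Longrightarrow> g (D u) y0 = c"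
    using V unfolding hatK0_def D_def eventually_ae_filter_negligible by blast
  have "g m y0 = c"
  proof (rule has_integral_unique)
    have "bounded_linear (\<lambda>x. g x y0)"
      using g by (simp add: bilinear_def linear_conv_bounded_linear)
    then show "((\<lambda>u. g (D u) y0) has_integral g m y0) {0..1}"
      using has_integral_linear[OF integrable_integral[OF D(1)]] by (simp add: m_def o_def)
    have "((\<lambda>u::real. c) has_integral c) {0..1}"
      using has_integral_const_real[of c 0 1] by simp
    then show "((\<lambda>u. g (D u) y0) has_integral c) {0..1}"
      by (rule has_integral_spike[OF N, rotated]) (use c in blast)
  qed
  then have "0 \<le> g (D u - m) (D u - m)" if "u \<in> {0..1} - N" for u
    using c[OF that] g by (intro neg_index_le_1_orthogonal_nonneg[OF g sym index y0])
      (simp add: bilinear_lsub)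
  then have "0 \<le> C0 g V V - g m m"
    using has_integral_nonneg_off_negligible[OF has_integral_bilinear_centered[OF g sym D] N]
    by (simp add: C0_def D_def m_def)
  moreover have "g m m = g (V 0) (V 0)"
    using m g by (simp add: bilinear_lneg bilinear_rneg)
  ultimately show ?thesis
    by simp
qed

lemma linear_eval_0: "Vector_Spaces.linear fscale scaleR (\<lambda>V :: real \<Rightarrow> real^'n. V 0)"
  by (simp add: Vector_Spaces.linear_iff vector_space_fscale real_vector.vector_space_axioms fscale_def)

definition line_to_zero :: "real^'n \<Rightarrow> real \<Rightarrow> real^'n" where
  "line_to_zero x = (\<lambda>t. if t \<in> {0..1} then (1 - t) *\<^sub>R x else 0)"

lemma line_to_zero_at_0 [simp]: "line_to_zero x 0 = x"
  by (simp add: line_to_zero_def)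

lemma linear_line_to_zero: "Vector_Spaces.linear scaleR fscale line_to_zero"
  by (auto simp: Vector_Spaces.linear_iff vector_space_fscale real_vector.vector_space_axioms
      fscale_def line_to_zero_def fun_eq_iff scaleR_add_right)

lemma is_h1_deriv_line_to_zero: "is_h1_deriv (line_to_zero x) (\<lambda>u. - x)"
  unfolding is_h1_deriv_def by (auto simp: line_to_zero_def algebra_simps)

lemma line_to_zero_in_H1_P: "x \<in> P \<Longrightarrow> line_to_zero x \<in> H1_P P"
  using is_h1_deriv_line_to_zero unfolding H1_P_def H1_def by (auto simp: line_to_zero_def)

lemma h1_deriv_line_to_zero:
  "\<exists>N. negligible N \<and> (\<forall>u\<in>{0..1} - N. h1_deriv (line_to_zero x) u = - x)"
proof -
  have "line_to_zero x \<in> H1"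
    using line_to_zero_in_H1_P[of x UNIV] by (simp add: H1_P_def)
  then show ?thesis
    by (rule is_h1_deriv_unique[OF is_h1_deriv_h1_deriv is_h1_deriv_line_to_zero])
qed

lemma line_to_zero_in_hatK0: "x \<in> P \<Longrightarrow> line_to_zero x \<in> hatK0 g P y0"
proof -
  assume "x \<in> P"
  obtain N where N: "negligible N" "\<forall>u\<in>{0..1} - N. h1_deriv (line_to_zero x) u = - x"
    using h1_deriv_line_to_zero by blast
  then have "AE u in lebesgue. u \<in> {0..1} \<longrightarrow> g (h1_deriv (line_to_zero x) u) y0 = g (- x) y0"
    unfolding eventually_ae_filter_negligible by (intro exI[of _ N]) force
  then show ?thesis
    using line_to_zero_in_H1_P[OF \<open>x \<in> P\<close>] unfolding hatK0_def by blast
qed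

lemma C0_line_to_zero:
  assumes "bilinear g"
  shows "C0 g (line_to_zero x) (line_to_zero x) = g x x"
proof -
  obtain N where N: "negligible N" "\<forall>u\<in>{0..1} - N. h1_deriv (line_to_zero x) u = - x"
    using h1_deriv_line_to_zero by blast
  have "C0 g (line_to_zero x) (line_to_zero x) = integral {0..1} (\<lambda>u::real. g (- x) (- x))"
    unfolding C0_def by (rule integral_spike[OF N(1)]) (use N(2) in auto)
  then show ?thesis
    using assms by (simp add: bilinear_lneg bilinear_rneg)
qed

theorem proposition4p10:
  fixes g :: "real^'n \<Rightarrow> real^'n \<Rightarrow> real"
    and R :: "real \<Rightarrow> real^'n^'n"
    and P :: "(real^'n) set"
    and Y Y' :: "real \<Rightarrow> real^'n"
  assumes g_bil: "bilinear g"
    and g_sym: "\<And>x y. g x y = g y x"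
    and g_nondeg: "\<And>x. (\<forall>y. g x y = 0) \<Longrightarrow> x = 0"
    and g_index: "neg_index scaleR g UNIV = 1"
    and R_cont: "continuous_on {0..1} R"
    and R_sym: "\<And>t x y. t \<in> {0..1} \<Longrightarrow> g (R t *v x) y = g x (R t *v y)"
    and P_sub: "subspace P"
    and P_nondeg: "\<And>x. x \<in> P \<Longrightarrow> (\<forall>y\<in>P. g x y = 0) \<Longrightarrow> x = 0"
    and Y_deriv: "\<And>t. t \<in> {0..1} \<Longrightarrow> (Y has_vector_derivative Y' t) (at t within {0..1})"
    and Y'_deriv: "\<And>t. t \<in> {0..1} \<Longrightarrow> (Y' has_vector_derivative (R t *v Y t)) (at t within {0..1})"
    and Y_timelike: "\<And>t. t \<in> {0..1} \<Longrightarrow> g (Y t) (Y t) < 0"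
  shows "neg_index fscale (C0 g) (hatK0 g P (Y 0)) = neg_index scaleR g P"
proof (rule antisym)
  have index: "neg_index scaleR g UNIV \<le> 1"
    using g_index by simp
  have "g (Y 0) (Y 0) < 0"
    using Y_timelike by simp
  then have le_C0: "g (V 0) (V 0) \<le> C0 g V V" if "V \<in> hatK0 g P (Y 0)" for V
    using initial_value_le_C0[OF g_bil g_sym index _ that] by blast
  show "neg_index fscale (C0 g) (hatK0 g P (Y 0)) \<le> neg_index scaleR g P"
  proof (rule neg_index_le_by_linear_map[OF linear_eval_0])
    show "(\<lambda>V. V 0) ` hatK0 g P (Y 0) \<subseteq> P"
      by (auto simp: hatK0_def H1_P_def)
    show "g (V 0) (V 0) \<le> C0 g V V" if "V \<in> hatK0 g P (Y 0)" for V
      using le_C0[OF that] .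
    show "0 \<le> C0 g V V" if "V \<in> hatK0 g P (Y 0)" and "V 0 = 0" for V
      using le_C0[OF that(1)] that(2) g_bil by (simp add: bilinear_lzero)
  qed
  show "neg_index scaleR g P \<le> neg_index fscale (C0 g) (hatK0 g P (Y 0))"
  proof (rule neg_index_le_by_linear_map[OF linear_line_to_zero])
    show "line_to_zero ` P \<subseteq> hatK0 g P (Y 0)"
      using line_to_zero_in_hatK0 by blast
    show "C0 g (line_to_zero x) (line_to_zero x) \<le> g x x" for x
      using C0_line_to_zero[OF g_bil] by simp
    show "0 \<le> g x x" if "line_to_zero x = 0" for x
      using that line_to_zero_at_0[of x] g_bil by (simp add: bilinear_lzero)
  qed
qed

end
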